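(* Let $L,n$ be positive integers and $B\in\mathcal M(L,n)$. Then \[\rho_N(B)=e^\star_{[L-1,L-1]}\,e^\star_{[L-2,L-1]}\cdots e^\star_{[2,L-1]}\,e^\star_{[1,L-1]}(B).\]
   Context: $\mathcal M(L,n)$ is the set of tuples $B=(B_1,\dots,B_L)$ of subsets of $[n]$, drawn with rows $1..L$ bottom to top, columns $1..n$ left to right, ball in $(r,j)$ iff $j\in B_r$. $\mathrm{cw}(B)$ scans columns left to right, each top to bottom, recording row numbers of balls. For a word $w$ and $i\ge1$, $\mathrm{Par}_i(w)$ writes "(" for each letter $i+1$ and ")" for each letter $i$, reading left to right, and iteratively matches a "(" with a ")" to its right when adjacent or separated only by matched parentheses. $e_i^\star(B)$ moves every ball of row $i+1$ whose letter in $\mathrm{cw}(B)$ is unmatched in $\mathrm{Par}_i(\mathrm{cw}(B))$ down to row $i$ in the same column. Products of operators act right to left, $e^\star_{[a,b]}=e^\star_ae^\star_{a+1}\cdots e^\star_b$ for $a\le b$, and $\rho_N(B)=e^\star_{[1,L-1]}e^\star_{[1,L-2]}\cdots e^\star_{[1,2]}e^\star_{[1,1]}(B)$. *)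

theory Defs
  imports Main
begin

text \<open>A ball configuration B = (B_1,...,B_L) is represented as a function
  from row indices to subsets of columns; rows outside 1..L are empty.\<close>
definition Mset :: "nat \<Rightarrow> nat \<Rightarrow> (nat \<Rightarrow> nat set) set" where
  "Mset L n = {B. \<forall>r. B r \<subseteq> {1..n} \<and> (r \<notin> {1..L} \<longrightarrow> B r = {})}"

definition cw_cells :: "nat \<Rightarrow> nat \<Rightarrow> (nat \<Rightarrow> nat set) \<Rightarrow> (nat \<times> nat) list" where
  "cw_cells L n B = [(r, j). j \<leftarrow> [1..<n+1], r \<leftarrow> rev [1..<L+1], j \<in> B r]"

definition cw :: "nat \<Rightarrow> nat \<Rightarrow> (nat \<Rightarrow> nat set) \<Rightarrow> nat list" where
  "cw L n B = map fst (cw_cells L n B)"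

text \<open>Bracketing Par_i: letter i+1 is an opening bracket, letter i a closing one.
  Matching an opening bracket with a closing bracket to its right when adjacent or
  separated only by matched brackets is realised by the usual stack scan; the result is
  the list of columns of the unmatched opening brackets (letters i+1).\<close>
fun par_unmatched :: "nat \<Rightarrow> (nat \<times> nat) list \<Rightarrow> nat list \<Rightarrow> nat list" where
  "par_unmatched i [] st = st"
| "par_unmatched i ((r, j) # w) st =
     (if r = i + 1 then par_unmatched i w (j # st)
      else if r = i then par_unmatched i w (drop 1 st)
      else par_unmatched i w st)"

definition unmatched_cols :: "nat \<Rightarrow> nat \<Rightarrow> nat \<Rightarrow> (nat \<Rightarrow> nat set) \<Rightarrow> nat set" where
  "unmatched_cols L n i B = set (par_unmatched i (cw_cells L n B) [])"

definition estar :: "nat \<Rightarrow> nat \<Rightarrow> nat \<Rightarrow> (nat \<Rightarrow> nat set) \<Rightarrow> (nat \<Rightarrow> nat set)" where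
  "estar L n i B = (let U = unmatched_cols L n i B in
      B((i + 1) := B (i + 1) - U, i := B i \<union> U))"

text \<open>e^star_[a,b] = e_a e_{a+1} ... e_b (rightmost acts first).\<close>
definition estar_int :: "nat \<Rightarrow> nat \<Rightarrow> nat \<Rightarrow> nat \<Rightarrow> (nat \<Rightarrow> nat set) \<Rightarrow> (nat \<Rightarrow> nat set)" where
  "estar_int L n a b B = foldr (\<lambda>i. estar L n i) [a..<b+1] B"

text \<open>rho_N(B) = e_[1,L-1] e_[1,L-2] ... e_[1,1] (B).\<close>
definition rhoN :: "nat \<Rightarrow> nat \<Rightarrow> (nat \<Rightarrow> nat set) \<Rightarrow> (nat \<Rightarrow> nat set)" where
  "rhoN L n B = foldr (\<lambda>k. estar_int L n 1 k) (rev [1..<L]) B"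

end

theory Submission
  imports Defs
begin

(* Both sides apply the operators e*_i along two reduced words of the longest permutation of
   S_L, namely (1..L-1)(1..L-2)...(1) and (L-1)(L-2..L-1)...(1..L-1). Reading a configuration
   column by column turns e*_i into an operator on words of cells, and these word operators
   satisfy the far commutation and braid relations, so the two reduced words act alike.
   The column reading is injective on M(L,n) and intertwines the two actions: a ball lowered
   from row i+1 never lands on an occupied cell, since a ball directly below it would be a
   closing bracket matching it. *)

lemma upt_split_at: "a \<le> i \<Longrightarrow> i < b \<Longrightarrow> [a..<b] = [a..<i] @ i # [Suc i..<b]"
  using upt_add_eq_append[of a i "b - i"] upt_conv_Cons[of i b] by auto

lemma foldr_concat: "foldr f (concat xss) x = foldr (\<lambda>xs. foldr f xs) xss x"
  by (induction xss) auto

locale braid_relations =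
  fixes s :: "nat \<Rightarrow> 'a \<Rightarrow> 'a"
  assumes commute: "Suc j < i \<Longrightarrow> s i (s j x) = s j (s i x)"
    and braid: "s i (s (Suc i) (s i x)) = s (Suc i) (s i (s (Suc i) x))"
begin

lemma foldr_commute:
  assumes "\<forall>i \<in> set xs. Suc i < j \<or> Suc j < i"
  shows "s j (foldr s xs x) = foldr s xs (s j x)"
  using assms by (induction xs) (auto simp: commute, metis commute)

lemma foldr_Suc_initial_segment:
  assumes "1 \<le> i" "i \<le> m"
  shows "s (Suc i) (foldr s [1..<m+2] x) = foldr s [1..<m+2] (s i x)"
proof -
  have split: "[1..<m+2] = [1..<i] @ i # Suc i # [i+2..<m+2]"
    using upt_split_at[of 1 i "m+2"] upt_split_at[of "Suc i" "Suc i" "m+2"] assms by simp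
  have "s (Suc i) (foldr s [1..<m+2] x)
      = foldr s [1..<i] (s (Suc i) (s i (s (Suc i) (foldr s [i+2..<m+2] x))))"
    unfolding split by (simp add: foldr_commute del: upt_Suc)
  also have "\<dots> = foldr s [1..<i] (s i (s (Suc i) (s i (foldr s [i+2..<m+2] x))))"
    by (simp add: braid)
  also have "\<dots> = foldr s [1..<m+2] (s i x)"
    unfolding split by (simp add: foldr_commute del: upt_Suc)
  finally show ?thesis .
qed

lemma foldr_map_Suc_initial_segment:
  assumes "set xs \<subseteq> {1..m}"
  shows "foldr s (map Suc xs) (foldr s [1..<m+2] x) = foldr s [1..<m+2] (foldr s xs x)"
  using assms
proof (induction xs)
  case (Cons i xs)
  then show ?case
    using foldr_Suc_initial_segment[of i m "foldr s xs x"] by (simp del: upt_Suc)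
qed simp

text \<open>The two words are reduced words of the longest permutation of S_(m+1).\<close>
theorem foldr_longest_words_eq:
  "foldr s (concat (map (\<lambda>k. [1..<k+1]) (rev [1..<m+1]))) x
   = foldr s (concat (map (\<lambda>a. [a..<m+1]) (rev [1..<m+1]))) x"
proof (induction m arbitrary: x)
  case 0
  then show ?case by simp
next
  case (Suc m)
  let ?cols = "concat (map (\<lambda>a. [a..<m+1]) (rev [1..<m+1]))"
  have "concat (map (\<lambda>a. [a..<m+2]) (rev [1..<m+2])) = map Suc ?cols @ [1..<m+2]"
    by (simp add: upt_conv_Cons map_Suc_upt[symmetric] rev_map map_concat comp_def
        del: upt_Suc)
  moreover have "set ?cols \<subseteq> {1..m}"
    by auto
  ultimately show ?case
    using Suc foldr_map_Suc_initial_segment[of ?cols m] by simp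
qed

end

text \<open>The number of letters i of w that no letter i+1 of w to their left matches.\<close>
fun unmatched_closers :: "nat \<Rightarrow> (nat \<times> nat) list \<Rightarrow> nat" where
  "unmatched_closers i [] = 0"
| "unmatched_closers i ((r, j) # w) =
     (if r = i then Suc (unmatched_closers i w)
      else if r = Suc i then unmatched_closers i w - 1
      else unmatched_closers i w)"

fun estar_word :: "nat \<Rightarrow> (nat \<times> nat) list \<Rightarrow> (nat \<times> nat) list" where
  "estar_word i [] = []"
| "estar_word i ((r, j) # w) =
     (if r = Suc i \<and> unmatched_closers i w = 0 then (i, j) else (r, j)) # estar_word i w"

lemma unmatched_closers_estar_word_far:
  "Suc j < i \<or> Suc i < j \<Longrightarrow> unmatched_closers i (estar_word j w) = unmatched_closers i w"
  by (induction w) auto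

lemma estar_word_commute:
  "Suc j < i \<or> Suc i < j \<Longrightarrow> estar_word i (estar_word j w) = estar_word j (estar_word i w)"
  by (induction w) (auto simp: unmatched_closers_estar_word_far)

text \<open>The counters before the head letter decide its fate on both sides of the braid
  relation; this invariant on them is what makes the induction go through.\<close>
lemma estar_word_braid_counters:
  "let a = unmatched_closers i w; b = unmatched_closers (Suc i) w;
       c = unmatched_closers i (estar_word (Suc i) w);
       d = unmatched_closers (Suc i) (estar_word i w);
       e = unmatched_closers i (estar_word (Suc i) (estar_word i w));
       f = unmatched_closers (Suc i) (estar_word i (estar_word (Suc i) w))
   in c \<le> a \<and> d \<le> b \<and> e = c + b - d \<and> f = d + a - c \<and> (c = a \<or> d = b)"
proof (induction w)
  case (Cons x w)
  then show ?case
    by (cases x) (auto simp: Let_def)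
qed simp

lemma estar_word_braid:
  "estar_word i (estar_word (Suc i) (estar_word i w))
   = estar_word (Suc i) (estar_word i (estar_word (Suc i) w))"
proof (induction w)
  case (Cons x w)
  then show ?case
    using estar_word_braid_counters[of i w] by (cases x) (auto simp: Let_def)
qed simp

interpretation estar_word: braid_relations estar_word
  by unfold_locales (simp_all add: estar_word_commute estar_word_braid)

lemma par_unmatched_stack:
  "par_unmatched i w st = par_unmatched i w [] @ drop (unmatched_closers i w) st"
proof (induction w arbitrary: st)
  case (Cons x w)
  obtain r j where x: "x = (r, j)"
    by fastforce
  show ?case
    using Cons.IH[of "j # st"] Cons.IH[of "[j]"] Cons.IH[of "drop 1 st"] Cons.IH[of st]
    unfolding x by (cases "unmatched_closers i w") auto
qed simp

definition unmatched_openers :: "nat \<Rightarrow> (nat \<times> nat) list \<Rightarrow> nat set" where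
  "unmatched_openers i w = set (par_unmatched i w [])"

lemma unmatched_openers_Nil [simp]: "unmatched_openers i [] = {}"
  by (simp add: unmatched_openers_def)

lemma unmatched_openers_Cons [simp]:
  "unmatched_openers i ((r, j) # w) =
     unmatched_openers i w \<union> (if r = Suc i \<and> unmatched_closers i w = 0 then {j} else {})"
  unfolding unmatched_openers_def
  using par_unmatched_stack[of i w "[j]"] par_unmatched_stack[of i w "[]"] by auto

lemma unmatched_openers_cell: "j \<in> unmatched_openers i w \<Longrightarrow> (Suc i, j) \<in> set w"
  by (induction w) (auto split: if_splits)

lemma unmatched_opener_before_closer:
  assumes "distinct (P @ (Suc i, j) # (i, k) # S)"
  shows "j \<notin> unmatched_openers i (P @ (Suc i, j) # (i, k) # S)"
  using assms
proof (induction P)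
  case Nil
  then show ?case
    using unmatched_openers_cell[of j i "(i, k) # S"] by auto
next
  case (Cons c P)
  then show ?case
    by (cases c) auto
qed

definition lower_cell :: "nat \<Rightarrow> nat set \<Rightarrow> nat \<times> nat \<Rightarrow> nat \<times> nat" where
  "lower_cell i U = (\<lambda>(r, j). if r = Suc i \<and> j \<in> U then (i, j) else (r, j))"

lemma estar_word_eq_map:
  "distinct w \<Longrightarrow> estar_word i w = map (lower_cell i (unmatched_openers i w)) w"
proof (induction w)
  case (Cons c w)
  obtain r j where c: "c = (r, j)"
    by fastforce
  have "(Suc i, j) \<notin> set w" if "r = Suc i"
    using Cons.prems c that by simp
  then have "map (lower_cell i (unmatched_openers i (c # w))) w
      = map (lower_cell i (unmatched_openers i w)) w"
    using Cons.prems unfolding c by (auto simp: lower_cell_def)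
  then show ?case
    using Cons unmatched_openers_cell[of j i w] unfolding c by (auto simp: lower_cell_def)
qed simp

definition column_cells :: "nat \<Rightarrow> (nat \<Rightarrow> nat set) \<Rightarrow> nat \<Rightarrow> (nat \<times> nat) list" where
  "column_cells L B j = map (\<lambda>r. (r, j)) (filter (\<lambda>r. j \<in> B r) (rev [1..<L+1]))"

lemma cw_cells_by_columns: "cw_cells L n B = concat (map (column_cells L B) [1..<n+1])"
proof -
  have singletons: "concat (map (\<lambda>r. if P r then [f r] else []) rs) = map f (filter P rs)"
    for P f and rs :: "nat list"
    by (induction rs) auto
  show ?thesis
    unfolding cw_cells_def column_cells_def by (simp add: singletons del: upt_Suc)
qed

lemma distinct_cw_cells: "distinct (cw_cells L n B)"
proof -
  have "distinct (concat (map (column_cells L B) js))" if "distinct js" for js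
    using that by (induction js) (auto simp: column_cells_def distinct_map inj_on_def)
  then show ?thesis
    unfolding cw_cells_by_columns by simp
qed

lemma set_cw_cells: "set (cw_cells L n B) = {(r, j). r \<in> {1..L} \<and> j \<in> {1..n} \<and> j \<in> B r}"
  by (auto simp: cw_cells_def)

lemma Mset_eqI:
  assumes "B \<in> Mset L n" "B' \<in> Mset L n" "cw_cells L n B = cw_cells L n B'"
  shows "B = B'"
proof
  fix r
  have "C r = {j. (r, j) \<in> set (cw_cells L n C)}" if "C \<in> Mset L n" for C
  proof -
    have "C r \<subseteq> {1..n}" "r \<notin> {1..L} \<Longrightarrow> C r = {}"
      using that unfolding Mset_def by auto
    then show ?thesis
      unfolding set_cw_cells by auto
  qed
  then show "B r = B' r"
    using assms by metis
qed

lemma rows_split: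
  assumes "1 \<le> i" "Suc i \<le> L"
  shows "rev [1..<L+1] = rev [i+2..<L+1] @ Suc i # i # rev [1..<i]"
  using upt_split_at[of 1 i "L+1"] upt_split_at[of "Suc i" "Suc i" "L+1"] assms by simp

lemma estar_eq_update:
  "estar L n i B = (let U = unmatched_openers i (cw_cells L n B) in
     B(Suc i := B (Suc i) - U, i := B i \<union> U))"
  by (simp add: estar_def unmatched_cols_def unmatched_openers_def)

lemma unmatched_openers_cw_cells:
  assumes "B \<in> Mset L n" "1 \<le> i" "Suc i \<le> L" and j: "j \<in> unmatched_openers i (cw_cells L n B)"
  shows "j \<in> {1..n}" "j \<in> B (Suc i)" "j \<notin> B i"
proof -
  show j_range: "j \<in> {1..n}" and "j \<in> B (Suc i)"
    using unmatched_openers_cell[OF j] unfolding set_cw_cells by auto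
  show "j \<notin> B i"
  proof
    assume "j \<in> B i"
    let ?cells = "\<lambda>rs. map (\<lambda>r. (r, j)) (filter (\<lambda>r. j \<in> B r) rs)"
    have "column_cells L B j
        = ?cells (rev [i+2..<L+1]) @ (Suc i, j) # (i, j) # ?cells (rev [1..<i])"
      unfolding column_cells_def rows_split[OF assms(2,3)]
      using \<open>j \<in> B (Suc i)\<close> \<open>j \<in> B i\<close> by simp
    then have "cw_cells L n B
        = (concat (map (column_cells L B) [1..<j]) @ ?cells (rev [i+2..<L+1]))
          @ (Suc i, j) # (i, j) # ?cells (rev [1..<i]) @ concat (map (column_cells L B) [Suc j..<n+1])"
      unfolding cw_cells_by_columns
      using upt_split_at[of 1 j "n+1"] j_range by simp
    then show False
      using unmatched_opener_before_closer distinct_cw_cells j by metis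
  qed
qed

lemma column_cells_estar:
  assumes B: "B \<in> Mset L n" and i: "1 \<le> i" "Suc i \<le> L"
  shows "column_cells L (estar L n i B) j
    = map (lower_cell i (unmatched_openers i (cw_cells L n B))) (column_cells L B j)"
proof -
  define U where "U = unmatched_openers i (cw_cells L n B)"
  have estar: "estar L n i B = B(Suc i := B (Suc i) - U, i := B i \<union> U)"
    unfolding estar_eq_update U_def Let_def ..
  show ?thesis
  proof (cases "j \<in> U")
    case True
    let ?A = "rev [i+2..<L+1]" and ?C = "rev [1..<i]"
    have far: "i \<notin> set ?A" "Suc i \<notin> set ?A" "i \<notin> set ?C" "Suc i \<notin> set ?C"
      by auto
    have keep_rows: "filter (\<lambda>r. j \<in> estar L n i B r) rs = filter (\<lambda>r. j \<in> B r) rs"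
      if "i \<notin> set rs" "Suc i \<notin> set rs" for rs
      using that by (auto simp: estar intro!: filter_cong)
    have keep_cells:
      "map (lower_cell i U) (map (\<lambda>r. (r, j)) (filter P rs)) = map (\<lambda>r. (r, j)) (filter P rs)"
      if "Suc i \<notin> set rs" for rs P
      using that by (auto simp: lower_cell_def)
    have "j \<in> B (Suc i)" "j \<notin> B i"
      using unmatched_openers_cw_cells[OF B i True[unfolded U_def]] by auto
    with True show ?thesis
      unfolding column_cells_def rows_split[OF i] filter_append map_append
        keep_rows[OF far(1,2)] keep_rows[OF far(3,4)] keep_cells[OF far(2)] keep_cells[OF far(4)]
      by (auto simp: estar lower_cell_def U_def intro!: map_cong filter_cong)
  next
    case False
    have "filter (\<lambda>r. j \<in> estar L n i B r) rs = filter (\<lambda>r. j \<in> B r) rs" for rs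
      using False by (auto simp: estar intro!: filter_cong)
    moreover have "map (lower_cell i U) (map (\<lambda>r. (r, j)) rs) = map (\<lambda>r. (r, j)) rs" for rs
      using False by (auto simp: lower_cell_def)
    ultimately show ?thesis
      unfolding column_cells_def U_def[symmetric] by presburger
  qed
qed

lemma cw_cells_estar:
  assumes "B \<in> Mset L n" "1 \<le> i" "Suc i \<le> L"
  shows "cw_cells L n (estar L n i B) = estar_word i (cw_cells L n B)"
proof -
  define g where "g = lower_cell i (unmatched_openers i (cw_cells L n B))"
  have "cw_cells L n (estar L n i B) = concat (map (column_cells L (estar L n i B)) [1..<n+1])"
    by (rule cw_cells_by_columns)
  also have "\<dots> = map g (concat (map (column_cells L B) [1..<n+1]))"
    unfolding map_concat map_map comp_def column_cells_estar[OF assms, folded g_def] ..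
  also have "\<dots> = estar_word i (cw_cells L n B)"
    unfolding g_def cw_cells_by_columns[symmetric]
    by (rule estar_word_eq_map[symmetric, OF distinct_cw_cells])
  finally show ?thesis .
qed

lemma estar_in_Mset:
  assumes "B \<in> Mset L n" "1 \<le> i" "Suc i \<le> L"
  shows "estar L n i B \<in> Mset L n"
  using assms unmatched_openers_cw_cells[OF assms]
  unfolding estar_eq_update Let_def Mset_def by auto

lemma foldr_estar_in_Mset:
  assumes "B \<in> Mset L n" "set xs \<subseteq> {1..<L}"
  shows "foldr (estar L n) xs B \<in> Mset L n"
  using assms by (induction xs) (auto simp: estar_in_Mset)

lemma cw_cells_foldr_estar:
  assumes "B \<in> Mset L n" "set xs \<subseteq> {1..<L}"
  shows "cw_cells L n (foldr (estar L n) xs B) = foldr estar_word xs (cw_cells L n B)"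
  using assms by (induction xs) (auto simp: cw_cells_estar foldr_estar_in_Mset)

theorem lemma4p13:
  fixes L n :: nat and B :: "nat \<Rightarrow> nat set"
  assumes "L \<ge> 1" and "n \<ge> 1" and "B \<in> Mset L n"
  shows "rhoN L n B = foldr (\<lambda>a. estar_int L n a (L - 1)) (rev [1..<L]) B"
proof -
  obtain m where L: "L = Suc m"
    using assms(1) by (cases L) auto
  let ?rows = "concat (map (\<lambda>k. [1..<k+1]) (rev [1..<m+1]))"
  let ?cols = "concat (map (\<lambda>a. [a..<m+1]) (rev [1..<m+1]))"
  have lhs: "rhoN L n B = foldr (estar L n) ?rows B"
    unfolding rhoN_def estar_int_def foldr_concat L by (simp add: foldr_map comp_def del: upt_Suc)
  have rhs: "foldr (\<lambda>a. estar_int L n a (L - 1)) (rev [1..<L]) B = foldr (estar L n) ?cols B"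
    unfolding estar_int_def foldr_concat L by (simp add: foldr_map comp_def del: upt_Suc)
  have ranges: "set ?rows \<subseteq> {1..<L}" "set ?cols \<subseteq> {1..<L}"
    unfolding L by auto
  have "cw_cells L n (foldr (estar L n) ?rows B) = cw_cells L n (foldr (estar L n) ?cols B)"
    unfolding cw_cells_foldr_estar[OF assms(3) ranges(1)] cw_cells_foldr_estar[OF assms(3) ranges(2)]
    by (rule estar_word.foldr_longest_words_eq)
  then show ?thesis
    unfolding lhs rhs using Mset_eqI foldr_estar_in_Mset assms(3) ranges by blast
qed

end
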